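(* In a $2^K$ factorial experiment, for nonempty $\mathcal F_+\subseteq\mathcal P_K$ and any $\mathcal F_+'\subseteq\mathcal P_K'$, the OLS outputs of the regression $Y_i\sim1+\sum_{\mathcal K\in\mathcal F_+}Z_{i,\mathcal K}+\sum_{\mathcal K\in\mathcal F_+'}Z_{i,\mathcal K}x_i$ satisfy $\tilde\tau_{r,+}=C_{S,+}\hat Y_{r,S}$ and $\tilde\Omega_{r,+}=C_{S,+}\hat\Psi_{r,S}C_{S,+}^T$.
   Context: $2^K$ factorial experiment: $Q=2^K$ treatment levels $(z_1,\dots,z_K)\in\{-1,+1\}^K$ identified with $1,\dots,Q$ lexicographically ($-1$ before $+1$). $N$ units with outcomes $Y_i$, covariates $x_i\in\mathbb R^J$ ($\sum_ix_i=0$), treatment indicator vector $t_i\in\{0,1\}^Q$, and factor levels $Z_{ik}\in\{-1,+1\}$. $\mathcal P_K$: nonempty subsets of $\{1,\dots,K\}$; $\mathcal P_K'=\{\emptyset\}\cup\mathcal P_K$; $Z_{i,\mathcal K}=\prod_{k\in\mathcal K}Z_{ik}$ with $Z_{i,\emptyset}=1$ (so $Z_{i,\emptyset}x_i=x_i$). $c_{\mathcal K}\in\mathbb R^Q$ has entry $2^{-(K-1)}\prod_{k\in\mathcal K}z_k$ at level $(z_1,\dots,z_K)$ (so $c_\emptyset=2^{-(K-1)}1_Q$). $C_{S,+}$ has rows $c_{\mathcal K}^T$, $\mathcal K\in\mathcal F_+$; $C_{S,-}$ has rows $c_{\mathcal K}^T$, $\mathcal K\in\mathcal P_K\setminus\mathcal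 F_+$ (the zero row $0^T$ if empty); $C'_{S,-}$ has rows $c_{\mathcal K}^T$, $\mathcal K\in\mathcal P_K'\setminus\mathcal F_+'$ (zero row if empty). OLS outputs: $\tilde\tau_{r,+}$ is the vector of 2 times the OLS coefficients of $Z_{i,\mathcal K}$, $\mathcal K\in\mathcal F_+$ (ordered as rows of $C_{S,+}$), and $\tilde\Omega_{r,+}$ its Eicker–Huber–White covariance estimator (4 times the corresponding block of $(X^TX)^{-1}X^T\mathrm{diag}(\hat\epsilon_i^2)X(X^TX)^{-1}$, $X$ design matrix, $\hat\epsilon_i$ residuals). Restricted least squares: $\chi_{L,i}=(t_i^T,(t_i\otimes x_i)^T)^T$, $\chi_L$ the matrix with rows $\chi_{L,i}^T$ ($\chi_L^T\chi_L$ nonsingular), $\theta=(\theta_Y^T,\theta_\gamma^T)^T$, $\theta_Y\in\mathbb R^Q$, $\theta_\gamma\in\mathbb R^{JQ}$. With restriction $R\theta=0$ given by $C_{S,-}\theta_Y=0$ and $(C'_{S,-}\otimes I_J)\theta_\gamma=0$ (dropping vacuous zero rows), $\hat\theta_r=\arg\min_\theta\sum_i(Y_i-\chi_{L,i}^T\theta)^2$ s.t. $R\theta=0$, and $\hat Y_{r,S}$ is its $\theta_Y$-part. With RLS residuals $\hat\epsilon_{r,i}$, $M_r=(\chi_L^T\chi_L)^{-1}R^T\{R(\chi_L^T\chi_L)^{-1}R^T\}^{-1}$ and $\hat\Sigma_r=(\chi_L^T\chi_L)^{-1}\chi_L^T\mathrm{diag}(\hat\epsilon_{r,i}^2)\chi_L(\chi_L^T\chi_L)^{-1}$,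 $\hat\Psi_{r,S}$ is the upper-left $Q\times Q$ block of $(I-M_rR)\hat\Sigma_r(I-M_rR)^T$. *)

theory Defs
  imports "Jordan_Normal_Form.Gauss_Jordan_Elimination"
begin

definition minv :: "real mat \<Rightarrow> real mat" where
  "minv A = the (mat_inverse A)"

definition vkron :: "real vec \<Rightarrow> real vec \<Rightarrow> real vec" where
  "vkron a b = vec (dim_vec a * dim_vec b)
     (\<lambda>c. a $ (c div dim_vec b) * b $ (c mod dim_vec b))"

definition mkron :: "real mat \<Rightarrow> real mat \<Rightarrow> real mat" where
  "mkron A B = mat (dim_row A * dim_row B) (dim_col A * dim_col B)
     (\<lambda>(i,j). A $$ (i div dim_row B, j div dim_col B) * B $$ (i mod dim_row B, j mod dim_col B))"

definition ols_coef :: "real mat \<Rightarrow> real vec \<Rightarrow> real vec" where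
  "ols_coef X Y = minv (transpose_mat X * X) *\<^sub>v (transpose_mat X *\<^sub>v Y)"

definition ols_resid :: "real mat \<Rightarrow> real vec \<Rightarrow> real vec" where
  "ols_resid X Y = Y - X *\<^sub>v ols_coef X Y"

definition sandwich :: "real mat \<Rightarrow> real vec \<Rightarrow> real mat" where
  "sandwich X e = minv (transpose_mat X * X) * transpose_mat X
      * mat_diag (dim_row X) (\<lambda>i. (e $ i)^2) * X * minv (transpose_mat X * X)"

definition ehw_cov :: "real mat \<Rightarrow> real vec \<Rightarrow> real mat" where
  "ehw_cov X Y = sandwich X (ols_resid X Y)"

definition ssr :: "real mat \<Rightarrow> real vec \<Rightarrow> real vec \<Rightarrow> real" where
  "ssr A Y \<theta> = (Y - A *\<^sub>v \<theta>) \<bullet> (Y - A *\<^sub>v \<theta>)"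

definition rls_coef :: "real mat \<Rightarrow> real mat \<Rightarrow> real vec \<Rightarrow> real vec" where
  "rls_coef A R Y = (THE \<theta>. \<theta> \<in> carrier_vec (dim_col A) \<and> R *\<^sub>v \<theta> = 0\<^sub>v (dim_row R) \<and>
      (\<forall>\<theta>'\<in>carrier_vec (dim_col A). R *\<^sub>v \<theta>' = 0\<^sub>v (dim_row R) \<longrightarrow> ssr A Y \<theta> \<le> ssr A Y \<theta>'))"

definition rls_resid :: "real mat \<Rightarrow> real mat \<Rightarrow> real vec \<Rightarrow> real vec" where
  "rls_resid A R Y = Y - A *\<^sub>v rls_coef A R Y"

definition rls_M :: "real mat \<Rightarrow> real mat \<Rightarrow> real mat" where
  "rls_M A R = minv (transpose_mat A * A) * transpose_mat R
      * minv (R * minv (transpose_mat A * A) * transpose_mat R)"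

definition rls_cov :: "real mat \<Rightarrow> real mat \<Rightarrow> real vec \<Rightarrow> real mat" where
  "rls_cov A R Y = (let P = 1\<^sub>m (dim_col A) - rls_M A R * R
      in P * sandwich A (rls_resid A R Y) * transpose_mat P)"

text \<open>Factors are indexed 0..K-1 (factor k+1 of the paper is k here); treatment levels are
  indexed 0..2^K-1 (level q+1 of the paper is q here).  Lexicographic order with -1 before +1
  means level q corresponds to the binary expansion of q, factor 0 being the most significant
  digit: z_k = +1 iff bit (K-1-k) of q is set.\<close>
definition zlev :: "nat \<Rightarrow> nat \<Rightarrow> nat \<Rightarrow> real" where
  "zlev K q k = (if bit q (K - 1 - k) then 1 else -1)"

definition zprod :: "nat \<Rightarrow> nat set \<Rightarrow> nat \<Rightarrow> real" where
  "zprod K S q = (\<Prod>k\<in>S. zlev K q k)"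

definition cvec :: "nat \<Rightarrow> nat set \<Rightarrow> real vec" where
  "cvec K S = vec (2^K) (\<lambda>q. zprod K S q / 2^(K-1))"

definition PK' :: "nat \<Rightarrow> nat set set" where "PK' K = Pow {..<K}"
definition PK :: "nat \<Rightarrow> nat set set" where "PK K = {S \<in> PK' K. S \<noteq> {}}"

definition subsets_list :: "nat \<Rightarrow> nat set list" where
  "subsets_list K = map (\<lambda>m. {k. k < K \<and> bit m k}) [0..<2^K]"

text \<open>Matrix with rows c_S for S in a list (the zero row if the list is empty); the
  restriction matrix below simply omits such vacuous zero rows.\<close>
definition Cmat :: "nat \<Rightarrow> nat set list \<Rightarrow> real mat" where
  "Cmat K Fs = mat_of_rows (2^K) (map (cvec K) Fs)"

definition Fminus :: "nat \<Rightarrow> nat set list \<Rightarrow> nat set list" where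
  "Fminus K Fp = filter (\<lambda>S. S \<in> PK K \<and> S \<notin> set Fp) (subsets_list K)"

definition Fminus' :: "nat \<Rightarrow> nat set list \<Rightarrow> nat set list" where
  "Fminus' K Fp' = filter (\<lambda>S. S \<in> PK' K \<and> S \<notin> set Fp') (subsets_list K)"

definition Rmat :: "nat \<Rightarrow> nat \<Rightarrow> nat set list \<Rightarrow> nat set list \<Rightarrow> real mat" where
  "Rmat K J Fp Fp' = (let Q = 2^K in
     four_block_mat (Cmat K (Fminus K Fp)) (0\<^sub>m (length (Fminus K Fp)) (J * Q))
                    (0\<^sub>m (length (Fminus' K Fp') * J) Q) (mkron (Cmat K (Fminus' K Fp')) (1\<^sub>m J)))"

definition chiL :: "nat \<Rightarrow> nat \<Rightarrow> nat \<Rightarrow> (nat \<Rightarrow> nat) \<Rightarrow> (nat \<Rightarrow> real vec) \<Rightarrow> real mat" where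
  "chiL K J N lev x = mat_of_rows (2^K + J * 2^K)
     (map (\<lambda>i. unit_vec (2^K) (lev i) @\<^sub>v vkron (unit_vec (2^K) (lev i)) (x i)) [0..<N])"

definition olsX :: "nat \<Rightarrow> nat \<Rightarrow> nat \<Rightarrow> (nat \<Rightarrow> nat) \<Rightarrow> (nat \<Rightarrow> real vec)
    \<Rightarrow> nat set list \<Rightarrow> nat set list \<Rightarrow> real mat" where
  "olsX K J N lev x Fp Fp' = mat_of_rows (1 + length Fp + length Fp' * J)
     (map (\<lambda>i. vec_of_list ([1] @ map (\<lambda>S. zprod K S (lev i)) Fp
         @ concat (map (\<lambda>S. map (\<lambda>j. zprod K S (lev i) * x i $ j) [0..<J]) Fp'))) [0..<N])"

definition tau_tilde :: "nat \<Rightarrow> nat \<Rightarrow> nat \<Rightarrow> (nat \<Rightarrow> nat) \<Rightarrow> (nat \<Rightarrow> real vec) \<Rightarrow> real vec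
    \<Rightarrow> nat set list \<Rightarrow> nat set list \<Rightarrow> real vec" where
  "tau_tilde K J N lev x Y Fp Fp' =
     vec (length Fp) (\<lambda>a. 2 * ols_coef (olsX K J N lev x Fp Fp') Y $ (a + 1))"

definition Omega_tilde :: "nat \<Rightarrow> nat \<Rightarrow> nat \<Rightarrow> (nat \<Rightarrow> nat) \<Rightarrow> (nat \<Rightarrow> real vec) \<Rightarrow> real vec
    \<Rightarrow> nat set list \<Rightarrow> nat set list \<Rightarrow> real mat" where
  "Omega_tilde K J N lev x Y Fp Fp' =
     mat (length Fp) (length Fp) (\<lambda>(a,b). 4 * ehw_cov (olsX K J N lev x Fp Fp') Y $$ (a + 1, b + 1))"

definition Yhat_rS :: "nat \<Rightarrow> nat \<Rightarrow> nat \<Rightarrow> (nat \<Rightarrow> nat) \<Rightarrow> (nat \<Rightarrow> real vec) \<Rightarrow> real vec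
    \<Rightarrow> nat set list \<Rightarrow> nat set list \<Rightarrow> real vec" where
  "Yhat_rS K J N lev x Y Fp Fp' =
     vec (2^K) (\<lambda>q. rls_coef (chiL K J N lev x) (Rmat K J Fp Fp') Y $ q)"

definition Psi_rS :: "nat \<Rightarrow> nat \<Rightarrow> nat \<Rightarrow> (nat \<Rightarrow> nat) \<Rightarrow> (nat \<Rightarrow> real vec) \<Rightarrow> real vec
    \<Rightarrow> nat set list \<Rightarrow> nat set list \<Rightarrow> real mat" where
  "Psi_rS K J N lev x Y Fp Fp' =
     mat (2^K) (2^K) (\<lambda>(a,b). rls_cov (chiL K J N lev x) (Rmat K J Fp Fp') Y $$ (a, b))"

end

theory Submission
  imports Defs "Jordan_Normal_Form.Determinant"
begin

(* Let the columns of B be the Walsh contrasts of the effects kept by the regression: the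
   intercept and F_+ in the theta_Y block, and F_+' (tensored with I_J) in the theta_gamma block.
   By orthogonality and completeness of the Walsh contrasts, B is orthogonal up to the factor 2^K,
   the restriction matrix R annihilates it, and suitable multiples of B B^T and R^T R add up to
   the identity; so theta = B beta parametrises exactly the constraint space {theta. R theta = 0}.
   Restricted least squares in chi_L is therefore ordinary least squares in chi_L B, and chi_L B is
   the design of the factorial regression: the RLS estimate is B times the OLS coefficients and
   the RLS sandwich is B Omega_EHW B^T. Applying C_{S,+} to the theta_Y rows of B picks out twice
   the coefficients of the Z_{i,K}, K in F_+. *)

section \<open>Matrix algebra\<close>

lemma assoc_mult_mat_dim:
  "dim_col (A :: 'a :: semiring_0 mat) = dim_row B \<Longrightarrow> dim_col B = dim_row C \<Longrightarrow> A * B * C = A * (B * C)"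
  by (rule assoc_mult_mat[of A "dim_row A" "dim_col A" B "dim_col B" C "dim_col C"]) auto

lemma assoc_mult_mat_vec_dim:
  "dim_col (A :: 'a :: semiring_0 mat) = dim_row B \<Longrightarrow> dim_col B = dim_vec v
   \<Longrightarrow> (A * B) *\<^sub>v v = A *\<^sub>v (B *\<^sub>v v)"
  by (rule assoc_mult_mat_vec[of A "dim_row A" "dim_col A" B "dim_col B" v]) auto

lemma transpose_mult_dim:
  "dim_col (A :: 'a :: comm_semiring_0 mat) = dim_row B \<Longrightarrow> transpose_mat (A * B) = transpose_mat B * transpose_mat A"
  by (rule transpose_mult[of A "dim_row A" "dim_col A" B "dim_col B"]) auto

lemma mult_minus_distrib_mat_dim:
  "dim_col (A :: 'a :: ring mat) = dim_row B \<Longrightarrow> dim_row C = dim_row B \<Longrightarrow> dim_col C = dim_col B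
   \<Longrightarrow> A * (B - C) = A * B - A * C"
  by (rule mult_minus_distrib_mat[of A "dim_row A" "dim_col A" B "dim_col B" C]) auto

lemma minus_mult_distrib_mat_dim:
  "dim_col (A :: 'a :: ring mat) = dim_row C \<Longrightarrow> dim_row B = dim_row A \<Longrightarrow> dim_col B = dim_col A
   \<Longrightarrow> (A - B) * C = A * C - B * C"
  by (rule minus_mult_distrib_mat[of A "dim_row A" "dim_col A" B C "dim_col C"]) auto

lemma add_mult_distrib_mat_dim:
  "dim_row (A :: 'a :: semiring_0 mat) = dim_row B \<Longrightarrow> dim_col A = dim_col B \<Longrightarrow> dim_col A = dim_row C
   \<Longrightarrow> (A + B) * C = A * C + B * C"
  by (rule add_mult_distrib_mat[of A "dim_row A" "dim_col A" B C "dim_col C"]) auto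

lemma add_mult_distrib_mat_vec_dim:
  "dim_row (A :: 'a :: semiring_0 mat) = dim_row B \<Longrightarrow> dim_col A = dim_col B \<Longrightarrow> dim_col A = dim_vec v
   \<Longrightarrow> (A + B) *\<^sub>v v = A *\<^sub>v v + B *\<^sub>v v"
  by (rule add_mult_distrib_mat_vec[of A "dim_row A" "dim_col A" B v]) (auto intro!: carrier_vecI)

lemma mult_carrier_mat_iff: "A * B \<in> carrier_mat nr nc \<longleftrightarrow> dim_row A = nr \<and> dim_col B = nc"
  unfolding carrier_mat_def by simp

lemma mult_mat_vec_carrier_iff: "A *\<^sub>v v \<in> carrier_vec n \<longleftrightarrow> dim_row A = n"
  unfolding carrier_vec_def by simp

text \<open>Dimension-based variants of library rules stated with carriers: their side conditions are
  discharged by \<open>simp\<close> from dimension facts, so that products normalise to right-nested form.\<close>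
lemmas mat_dim_simps = assoc_mult_mat_dim assoc_mult_mat_vec_dim transpose_mult_dim
  mult_minus_distrib_mat_dim minus_mult_distrib_mat_dim add_mult_distrib_mat_dim add_mult_distrib_mat_vec_dim

lemma mult_mat_vec_zero [simp]:
  "dim_col (M :: 'a :: semiring_0 mat) = n \<Longrightarrow> M *\<^sub>v 0\<^sub>v n = 0\<^sub>v (dim_row M)"
  by (intro eq_vecI) (auto simp: scalar_prod_def)

lemma zero_mult_mat_vec [simp]: "dim_vec v = n \<Longrightarrow> 0\<^sub>m m n *\<^sub>v v = (0\<^sub>v m :: 'a :: semiring_0 vec)"
  by (intro eq_vecI) (auto simp: scalar_prod_def)

lemma minus_zero_mat [simp]:
  "dim_row (A :: 'a :: group_add mat) = nr \<Longrightarrow> dim_col A = nc \<Longrightarrow> A - 0\<^sub>m nr nc = A"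
  by (intro eq_matI) auto

lemma minus_vec_eq_0_iff:
  assumes "(v :: 'a :: group_add vec) \<in> carrier_vec n" and "w \<in> carrier_vec n"
  shows "v - w = 0\<^sub>v n \<longleftrightarrow> v = w"
proof
  assume "v - w = 0\<^sub>v n"
  then have "(v - w) $ i = 0" if "i < n" for i
    using that by simp
  then show "v = w"
    using assms by (intro eq_vecI) auto
qed (use assms in simp)

lemma scalar_prod_append_dim:
  "dim_vec w1 = dim_vec v1 \<Longrightarrow> dim_vec w2 = dim_vec v2
   \<Longrightarrow> (v1 @\<^sub>v v2) \<bullet> (w1 @\<^sub>v w2) = v1 \<bullet> w1 + v2 \<bullet> w2"
  by (rule scalar_prod_append) (auto intro!: carrier_vecI)

lemma unit_vec_scalar_prod_dim:
  "i < n \<Longrightarrow> dim_vec v = n \<Longrightarrow> unit_vec n i \<bullet> (v :: 'a :: semiring_1 vec) = v $ i"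
  by (rule scalar_prod_left_unit) (auto intro!: carrier_vecI)

lemma scalar_prod_zero_vec_dim: "dim_vec v = n \<Longrightarrow> v \<bullet> 0\<^sub>v n = 0"
  by (rule scalar_prod_right_zero) (auto intro!: carrier_vecI)

lemma real_scalar_prod_self_ge_0: "0 \<le> (v :: real vec) \<bullet> v"
  using conjugate_square_ge_0_vec[of v] by simp

lemma real_scalar_prod_self_eq_0_iff:
  "(v :: real vec) \<in> carrier_vec n \<Longrightarrow> v \<bullet> v = 0 \<longleftrightarrow> v = 0\<^sub>v n"
  using conjugate_square_eq_0_vec[of v n] by simp

lemma gram_quadratic_form:
  assumes "(M :: real mat) \<in> carrier_mat N p" and "v \<in> carrier_vec p"
  shows "v \<bullet> ((transpose_mat M * M) *\<^sub>v v) = (M *\<^sub>v v) \<bullet> (M *\<^sub>v v)"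
proof -
  have "v \<bullet> ((transpose_mat M * M) *\<^sub>v v) = (transpose_mat M *\<^sub>v (M *\<^sub>v v)) \<bullet> v"
    using assms by (simp add: mat_dim_simps comm_scalar_prod[of v p])
  also have "\<dots> = (M *\<^sub>v v) \<bullet> (M *\<^sub>v v)"
    using assms by (intro transpose_vec_mult_scalar) auto
  finally show ?thesis .
qed

lemma det_gram_ne_0_iff_inj:
  assumes M: "(M :: real mat) \<in> carrier_mat N p"
  shows "det (transpose_mat M * M) \<noteq> 0 \<longleftrightarrow> (\<forall>v \<in> carrier_vec p. M *\<^sub>v v = 0\<^sub>v N \<longrightarrow> v = 0\<^sub>v p)"
proof -
  have "(transpose_mat M * M) *\<^sub>v v = 0\<^sub>v p \<longleftrightarrow> M *\<^sub>v v = 0\<^sub>v N" if v: "v \<in> carrier_vec p" for v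
  proof
    assume "(transpose_mat M * M) *\<^sub>v v = 0\<^sub>v p"
    then have "(M *\<^sub>v v) \<bullet> (M *\<^sub>v v) = 0"
      using gram_quadratic_form[OF M v] v by simp
    then show "M *\<^sub>v v = 0\<^sub>v N"
      using real_scalar_prod_self_eq_0_iff[of "M *\<^sub>v v" N] M v by simp
  qed (use M v in \<open>simp add: mat_dim_simps\<close>)
  then show ?thesis
    using det_0_iff_vec_prod_zero[of "transpose_mat M * M" p] M by auto
qed

lemma det_ne_0_if_invertible_mat:
  assumes A: "(A :: real mat) \<in> carrier_mat n n" and "invertible_mat A"
  shows "det A \<noteq> 0"
proof -
  obtain B where AB: "A * B = 1\<^sub>m n" and BA: "B * A = 1\<^sub>m (dim_row B)"
    using assms unfolding invertible_mat_def inverts_mat_def by auto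
  then have "B \<in> carrier_mat n n"
    using A by (metis carrier_matD(2) carrier_matI index_mult_mat(3) index_one_mat(3))
  then have "det A * det B = 1"
    using A AB by (metis det_mult det_one)
  then show ?thesis by auto
qed

lemma minv:
  assumes A: "(A :: real mat) \<in> carrier_mat n n" and "det A \<noteq> 0"
  shows minv_carrier: "minv A \<in> carrier_mat n n"
    and mult_minv: "A * minv A = 1\<^sub>m n"
    and minv_mult: "minv A * A = 1\<^sub>m n"
proof -
  have "A \<in> Units (ring_mat TYPE(real) n undefined)"
    by (rule det_non_zero_imp_unit[OF assms])
  then obtain B where "mat_inverse A = Some B"
    using mat_inverse(1)[OF A, of undefined] by (cases "mat_inverse A") auto
  then show "minv A \<in> carrier_mat n n" "A * minv A = 1\<^sub>m n" "minv A * A = 1\<^sub>m n"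
    using mat_inverse(2)[OF A] unfolding minv_def by auto
qed

lemma transpose_minv_symmetric:
  assumes A: "(A :: real mat) \<in> carrier_mat n n" and "det A \<noteq> 0" and "transpose_mat A = A"
  shows "transpose_mat (minv A) = minv A"
proof -
  note inv = minv[OF assms(1,2)]
  have "transpose_mat (minv A) = transpose_mat (minv A) * (A * minv A)"
    using inv by simp
  also have "\<dots> = transpose_mat (A * minv A) * minv A"
    using A inv(1) assms(3) by (simp add: mat_dim_simps)
  finally show ?thesis
    using inv by simp
qed

lemma transpose_gram: "transpose_mat (transpose_mat (M :: real mat) * M) = transpose_mat M * M"
  by (simp add: transpose_mult_dim)

lemma sandwich_as_congruence:
  assumes "(P :: real mat) \<in> carrier_mat k n" and "G \<in> carrier_mat n n" and "transpose_mat G = G"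
    and "A \<in> carrier_mat N n" and "E \<in> carrier_mat N N"
  shows "P * (G * transpose_mat A * E * A * G) * transpose_mat P
       = (P * G * transpose_mat A) * E * transpose_mat (P * G * transpose_mat A)"
  using assms by (simp add: mat_dim_simps)

lemma smult_mult_mat_dim:
  "dim_col (A :: 'a :: comm_semiring_0 mat) = dim_row B \<Longrightarrow> (k \<cdot>\<^sub>m A) * B = k \<cdot>\<^sub>m (A * B)"
  by (rule mult_smult_assoc_mat[of A "dim_row A" "dim_col A" B "dim_col B"]) auto

lemma mult_smult_mat_dim:
  "dim_col (A :: 'a :: comm_semiring_0 mat) = dim_row B \<Longrightarrow> A * (k \<cdot>\<^sub>m B) = k \<cdot>\<^sub>m (A * B)"
  by (rule mult_smult_distrib[of A "dim_row A" "dim_col A" B "dim_col B"]) auto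

lemma smult_smult_mat: "k \<cdot>\<^sub>m (l \<cdot>\<^sub>m A) = (k * l :: 'a :: semigroup_mult) \<cdot>\<^sub>m A"
  by (intro eq_matI) (auto simp: mult.assoc)

lemma transpose_smult_mat: "transpose_mat (k \<cdot>\<^sub>m A) = k \<cdot>\<^sub>m transpose_mat (A :: 'a :: times mat)"
  by (intro eq_matI) auto

lemma smult_add_mat_dim:
  "dim_row A = dim_row B \<Longrightarrow> dim_col A = dim_col B
   \<Longrightarrow> k \<cdot>\<^sub>m (A + B) = k \<cdot>\<^sub>m A + k \<cdot>\<^sub>m (B :: 'a :: semiring mat)"
  by (intro eq_matI) (auto simp: distrib_left)

lemma one_smult_mat: "1 \<cdot>\<^sub>m A = (A :: 'a :: monoid_mult mat)"
  by (intro eq_matI) auto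

lemmas smult_mat_simps = smult_mult_mat_dim mult_smult_mat_dim smult_smult_mat transpose_smult_mat

definition take_rows_mat :: "nat \<Rightarrow> 'a mat \<Rightarrow> 'a mat" where
  "take_rows_mat k M = mat k (dim_col M) (\<lambda>(i, j). M $$ (i, j))"

lemma take_rows_mat_carrier [simp]:
  "take_rows_mat k M \<in> carrier_mat k (dim_col M)"
  "dim_row (take_rows_mat k M) = k" "dim_col (take_rows_mat k M) = dim_col M"
  unfolding take_rows_mat_def by auto

lemma row_take_rows_mat: "i < k \<Longrightarrow> k \<le> dim_row M \<Longrightarrow> row (take_rows_mat k M) i = row M i"
  unfolding take_rows_mat_def by (intro eq_vecI) auto

lemma take_rows_mat_sandwich:
  assumes "i < k" "j < k" "k \<le> dim_row M"
  shows "(take_rows_mat k M * S * transpose_mat (take_rows_mat k M)) $$ (i, j) = (M * S * transpose_mat M) $$ (i, j)"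
proof -
  have "row (take_rows_mat k M * S) i = row (M * S) i"
    using assms by (intro eq_vecI) (auto simp: row_take_rows_mat)
  then show ?thesis
    using assms by (simp add: row_take_rows_mat)
qed

lemma shifted_selector_mult_vec:
  assumes "a < r" "a + k < n" "dim_vec v = n"
  shows "(mat r n (\<lambda>(a, c). if c = a + k then w else 0) *\<^sub>v v) $ a = w * v $ (a + k)"
  using assms by (simp add: scalar_prod_def if_distrib[where f = "\<lambda>x. x * _"] cong: if_cong)

lemma shifted_selector_sandwich:
  fixes w :: "'a :: comm_semiring_1" and S :: "'a mat"
  assumes "a < r" "b < r" "a + k < n" "b + k < n" "dim_row S = n" "dim_col S = n"
  defines "U \<equiv> mat r n (\<lambda>(a, c). if c = a + k then w else 0)"
  shows "(U * S * transpose_mat U) $$ (a, b) = w * w * S $$ (a + k, b + k)"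
  using assms
  by (simp add: scalar_prod_def if_distrib[where f = "\<lambda>x. x * _"] if_distrib[where f = "\<lambda>x. _ * x"]
      mult_ac cong: if_cong)

section \<open>Ordinary least squares\<close>

lemma ols_coef_carrier:
  "(X :: real mat) \<in> carrier_mat N p \<Longrightarrow> det (transpose_mat X * X) \<noteq> 0 \<Longrightarrow> Y \<in> carrier_vec N
   \<Longrightarrow> ols_coef X Y \<in> carrier_vec p"
  unfolding ols_coef_def using minv_carrier[of "transpose_mat X * X" p] by simp

lemma ols_normal_equations:
  assumes X: "(X :: real mat) \<in> carrier_mat N p" and det: "det (transpose_mat X * X) \<noteq> 0"
    and Y: "Y \<in> carrier_vec N"
  shows "transpose_mat X *\<^sub>v (Y - X *\<^sub>v ols_coef X Y) = 0\<^sub>v p"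
proof -
  note inv = minv[of "transpose_mat X * X" p, OF _ det]
  have "transpose_mat X *\<^sub>v (X *\<^sub>v ols_coef X Y)
      = (transpose_mat X * X * minv (transpose_mat X * X)) *\<^sub>v (transpose_mat X *\<^sub>v Y)"
    unfolding ols_coef_def using X Y inv(1) by (simp add: mat_dim_simps)
  also have "\<dots> = transpose_mat X *\<^sub>v Y"
    using X Y inv by simp
  finally show ?thesis
    using X Y ols_coef_carrier[OF X det Y] by (simp add: mult_minus_distrib_mat_vec[of _ p N])
qed

lemma ssr_ols_pythagoras:
  assumes X: "(X :: real mat) \<in> carrier_mat N p" and det: "det (transpose_mat X * X) \<noteq> 0"
    and Y: "Y \<in> carrier_vec N" and b: "b \<in> carrier_vec p"
  defines "d \<equiv> X *\<^sub>v (ols_coef X Y - b)"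
  shows "ssr X Y b = ssr X Y (ols_coef X Y) + d \<bullet> d"
proof -
  define \<beta> where "\<beta> = ols_coef X Y"
  define r where "r = Y - X *\<^sub>v \<beta>"
  have \<beta>: "\<beta> \<in> carrier_vec p" unfolding \<beta>_def by (rule ols_coef_carrier[OF X det Y])
  have r: "r \<in> carrier_vec N" and d: "d \<in> carrier_vec N"
    unfolding r_def d_def \<beta>_def[symmetric] using X Y \<beta> b by auto
  have "Y - X *\<^sub>v b = r + d"
    unfolding r_def d_def \<beta>_def[symmetric] using X Y \<beta> b
    by (intro eq_vecI) (auto simp: mult_minus_distrib_mat_vec[of _ N p])
  moreover have "r \<bullet> d = 0"
  proof -
    have "r \<bullet> d = (transpose_mat X *\<^sub>v r) \<bullet> (\<beta> - b)"
      unfolding d_def \<beta>_def[symmetric] using transpose_vec_mult_scalar[OF X _ r, of "\<beta> - b"] \<beta> b by simp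
    then show ?thesis
      using ols_normal_equations[OF X det Y] \<beta> b unfolding r_def \<beta>_def by simp
  qed
  moreover have "(r + d) \<bullet> (r + d) = r \<bullet> r + d \<bullet> d + 2 * (r \<bullet> d)"
    using r d by (simp add: add_scalar_prod_distrib scalar_prod_add_distrib comm_scalar_prod[of d N r])
  ultimately show ?thesis
    unfolding ssr_def r_def[symmetric] \<beta>_def[symmetric] by simp
qed

section \<open>Restricted least squares by reparametrisation\<close>

text \<open>The constraint space \<open>{\<theta>. R \<theta> = 0}\<close> is the range of \<open>B\<close>: \<open>R_B\<close> gives one
  inclusion and \<open>kernel_decomposition\<close> the other. \<open>L\<close> and \<open>S\<close> witness that \<open>B\<close> is
  injective and \<open>R\<close> surjective.\<close>
locale rls_reparametrisation =
  fixes A R B L D S :: "real mat" and Y :: "real vec" and N n m p :: nat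
  assumes A_carrier [simp]: "A \<in> carrier_mat N n"
    and R_carrier [simp]: "R \<in> carrier_mat m n"
    and B_carrier [simp]: "B \<in> carrier_mat n p"
    and L_carrier [simp]: "L \<in> carrier_mat p n"
    and D_carrier [simp]: "D \<in> carrier_mat m m"
    and S_carrier [simp]: "S \<in> carrier_mat n m"
    and Y_carrier [simp]: "Y \<in> carrier_vec N"
    and det_gram_A: "det (transpose_mat A * A) \<noteq> 0"
    and L_B: "L * B = 1\<^sub>m p"
    and R_S: "R * S = 1\<^sub>m m"
    and R_B: "R * B = 0\<^sub>m m p"
    and kernel_decomposition: "B * L + transpose_mat R * D * R = 1\<^sub>m n"
begin

lemmas [simp] = mult_carrier_mat_iff mult_mat_vec_carrier_iff

lemma dims [simp]:
  "dim_row A = N" "dim_col A = n" "dim_row R = m" "dim_col R = n" "dim_row B = n" "dim_col B = p"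
  "dim_row L = p" "dim_col L = n" "dim_row D = m" "dim_col D = m" "dim_row S = n" "dim_col S = m"
  "dim_vec Y = N"
  using carrier_matD[OF A_carrier] carrier_matD[OF R_carrier] carrier_matD[OF B_carrier]
    carrier_matD[OF L_carrier] carrier_matD[OF D_carrier] carrier_matD[OF S_carrier]
    carrier_vecD[OF Y_carrier] by auto

abbreviation "X \<equiv> A * B"

lemma X_carrier: "X \<in> carrier_mat N p"
  by simp

definition "G = minv (transpose_mat A * A)"
definition "H = minv (transpose_mat X * X)"

lemma G_carrier [simp]: "G \<in> carrier_mat n n"
  unfolding G_def using minv_carrier[of _ n, OF _ det_gram_A] by simp

lemma G_dims [simp]: "dim_row G = n" "dim_col G = n"
  using carrier_matD[OF G_carrier] by auto

lemma gram_A_G: "dim_row Z = n \<Longrightarrow> transpose_mat A * (A * (G * Z)) = Z"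
  using mult_minv[of _ n, OF _ det_gram_A] unfolding G_def[symmetric]
  by (simp add: assoc_mult_mat_dim[symmetric])

lemma G_symmetric: "transpose_mat G = G"
  unfolding G_def by (rule transpose_minv_symmetric[OF _ det_gram_A transpose_gram]) simp

lemma A_inj: "u \<in> carrier_vec n \<Longrightarrow> A *\<^sub>v u = 0\<^sub>v N \<Longrightarrow> u = 0\<^sub>v n"
  using det_gram_A det_gram_ne_0_iff_inj[OF A_carrier] by blast

lemma X_inj:
  assumes v: "v \<in> carrier_vec p" and "X *\<^sub>v v = 0\<^sub>v N"
  shows "v = 0\<^sub>v p"
proof -
  have "B *\<^sub>v v = 0\<^sub>v n"
    using assms A_inj[of "B *\<^sub>v v"] by (simp add: mat_dim_simps)
  then have "(L * B) *\<^sub>v v = 0\<^sub>v p"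
    using v by (simp add: mat_dim_simps)
  then show ?thesis
    using v L_B by simp
qed

lemma det_gram_X: "det (transpose_mat X * X) \<noteq> 0"
  using det_gram_ne_0_iff_inj[of X N p] X_inj by simp

lemma H_carrier [simp]: "H \<in> carrier_mat p p"
  unfolding H_def using minv_carrier[of _ p, OF _ det_gram_X] by simp

lemma H_dims [simp]: "dim_row H = p" "dim_col H = p"
  using carrier_matD[OF H_carrier] by auto

lemma H_gram_X: "dim_row Z = p \<Longrightarrow> H * (transpose_mat B * (transpose_mat A * (A * (B * Z)))) = Z"
  using minv_mult[of _ p, OF _ det_gram_X] unfolding H_def[symmetric]
  by (simp add: transpose_mult_dim assoc_mult_mat_dim[symmetric])

lemma H_symmetric: "transpose_mat H = H"
  unfolding H_def by (rule transpose_minv_symmetric[OF _ det_gram_X transpose_gram]) simp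

lemma constraint_space_in_range:
  assumes "dim_row Z = n" and "R * Z = 0\<^sub>m m (dim_col Z)"
  shows "Z = B * (L * Z)"
proof -
  have "Z = (B * L + transpose_mat R * D * R) * Z"
    using assms kernel_decomposition by simp
  also have "\<dots> = B * (L * Z) + transpose_mat R * (D * (R * Z))"
    using assms by (simp add: mat_dim_simps)
  finally show ?thesis
    using assms by simp
qed

lemma constraint_vec_in_range:
  assumes "t \<in> carrier_vec n" and "R *\<^sub>v t = 0\<^sub>v m"
  shows "t = B *\<^sub>v (L *\<^sub>v t)"
proof -
  have "t = (B * L + transpose_mat R * D * R) *\<^sub>v t"
    using assms kernel_decomposition by simp
  also have "\<dots> = B *\<^sub>v (L *\<^sub>v t) + transpose_mat R *\<^sub>v (D *\<^sub>v (R *\<^sub>v t))"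
    using assms by (simp add: mat_dim_simps)
  finally show ?thesis
    using assms by simp
qed

lemma range_in_constraint_space: "dim_vec b = p \<Longrightarrow> R *\<^sub>v (B *\<^sub>v b) = 0\<^sub>v m"
  using R_B by (simp add: assoc_mult_mat_vec_dim[symmetric])

lemma ssr_reparametrised: "dim_vec b = p \<Longrightarrow> ssr A Y (B *\<^sub>v b) = ssr X Y b"
  unfolding ssr_def by (simp add: mat_dim_simps)

lemma rls_coef_reparametrised: "rls_coef A R Y = B *\<^sub>v ols_coef X Y"
proof -
  define \<beta> where "\<beta> = ols_coef X Y"
  have \<beta>: "\<beta> \<in> carrier_vec p"
    unfolding \<beta>_def by (rule ols_coef_carrier[OF X_carrier det_gram_X Y_carrier])
  have excess: "ssr A Y (B *\<^sub>v b) = ssr A Y (B *\<^sub>v \<beta>) + (X *\<^sub>v (\<beta> - b)) \<bullet> (X *\<^sub>v (\<beta> - b))"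
    if "b \<in> carrier_vec p" for b
    using ssr_ols_pythagoras[OF X_carrier det_gram_X Y_carrier that] \<beta> that
    unfolding \<beta>_def by (simp add: ssr_reparametrised)
  show ?thesis
    unfolding rls_coef_def \<beta>_def[symmetric] dims
  proof (rule the_equality, intro conjI ballI impI)
    show "B *\<^sub>v \<beta> \<in> carrier_vec n" "R *\<^sub>v (B *\<^sub>v \<beta>) = 0\<^sub>v m"
      using \<beta> range_in_constraint_space by auto
    fix t assume "t \<in> carrier_vec n" "R *\<^sub>v t = 0\<^sub>v m"
    then have "t = B *\<^sub>v (L *\<^sub>v t)" "L *\<^sub>v t \<in> carrier_vec p"
      using constraint_vec_in_range by auto
    then show "ssr A Y (B *\<^sub>v \<beta>) \<le> ssr A Y t"
      using excess real_scalar_prod_self_ge_0 by (metis le_add_same_cancel1)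
  next
    fix t assume t: "t \<in> carrier_vec n \<and> R *\<^sub>v t = 0\<^sub>v m \<and>
      (\<forall>t' \<in> carrier_vec n. R *\<^sub>v t' = 0\<^sub>v m \<longrightarrow> ssr A Y t \<le> ssr A Y t')"
    define b where "b = L *\<^sub>v t"
    have b: "b \<in> carrier_vec p" and tb: "t = B *\<^sub>v b"
      unfolding b_def using t constraint_vec_in_range by auto
    have "ssr A Y t \<le> ssr A Y (B *\<^sub>v \<beta>)"
      using t \<beta> range_in_constraint_space by auto
    then have "(X *\<^sub>v (\<beta> - b)) \<bullet> (X *\<^sub>v (\<beta> - b)) = 0"
      using excess[OF b] real_scalar_prod_self_ge_0[of "X *\<^sub>v (\<beta> - b)"] tb by simp
    then have "\<beta> - b = 0\<^sub>v p"
      using X_inj[of "\<beta> - b"] real_scalar_prod_self_eq_0_iff[of "X *\<^sub>v (\<beta> - b)" N] \<beta> b by simp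
    then show "t = B *\<^sub>v \<beta>"
      using tb minus_vec_eq_0_iff[OF \<beta> b] by simp
  qed
qed

definition "Hr = minv (R * G * transpose_mat R)"

abbreviation "P \<equiv> 1\<^sub>m n - rls_M A R * R"

lemma det_RGR: "det (R * G * transpose_mat R) \<noteq> 0"
proof -
  define W where "W = A * (G * transpose_mat R)"
  have W: "W \<in> carrier_mat N m"
    unfolding W_def by simp
  have "transpose_mat W * W = R * G * transpose_mat R"
    unfolding W_def using G_symmetric gram_A_G[of "transpose_mat R"]
    by (simp add: mat_dim_simps)
  moreover have "v = 0\<^sub>v m" if v: "v \<in> carrier_vec m" and "W *\<^sub>v v = 0\<^sub>v N" for v
  proof -
    have "G *\<^sub>v (transpose_mat R *\<^sub>v v) = 0\<^sub>v n"
      using that A_inj[of "G *\<^sub>v (transpose_mat R *\<^sub>v v)"] unfolding W_def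
      by (simp add: mat_dim_simps)
    then have "(transpose_mat A * (A * (G * transpose_mat R))) *\<^sub>v v = 0\<^sub>v n"
      using v by (simp add: mat_dim_simps)
    then have "(transpose_mat S * transpose_mat R) *\<^sub>v v = 0\<^sub>v m"
      using v gram_A_G[of "transpose_mat R"] by (simp add: mat_dim_simps)
    moreover have "transpose_mat S * transpose_mat R = transpose_mat (R * S)"
      by (simp add: transpose_mult_dim)
    then have "transpose_mat S * transpose_mat R = 1\<^sub>m m"
      unfolding R_S by simp
    ultimately show ?thesis
      using v by simp
  qed
  ultimately show ?thesis
    using det_gram_ne_0_iff_inj[OF W] by auto
qed

lemma Hr_carrier [simp]: "Hr \<in> carrier_mat m m"
  unfolding Hr_def using minv_carrier[of _ m, OF _ det_RGR] by simp

lemma Hr_dims [simp]: "dim_row Hr = m" "dim_col Hr = m"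
  using carrier_matD[OF Hr_carrier] by auto

lemma RGR_Hr: "dim_row Z = m \<Longrightarrow> R * (G * (transpose_mat R * (Hr * Z))) = Z"
  using mult_minv[of _ m, OF _ det_RGR] unfolding Hr_def[symmetric]
  by (simp add: assoc_mult_mat_dim[symmetric])

lemma rls_M_eq: "rls_M A R = G * (transpose_mat R * Hr)"
  unfolding rls_M_def G_def[symmetric] Hr_def[symmetric] by (simp add: mat_dim_simps)

lemma R_P: "R * P = 0\<^sub>m m n"
  unfolding rls_M_eq using RGR_Hr[of R] by (simp add: mat_dim_simps)

text \<open>Both sides map \<open>Y\<close> to the RLS estimate: the left one through the Lagrange-multiplier
  form \<open>(I - M\<^sub>r R) \<theta>\<^sub>O\<^sub>L\<^sub>S\<close> on which \<open>rls_cov\<close> is built, the right one through the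
  reparametrisation.\<close>
lemma P_G_At: "P * (G * transpose_mat A) = B * (H * transpose_mat X)"
proof -
  define Z where "Z = P * (G * transpose_mat A)"
  have Z: "dim_row Z = n" "dim_col Z = N"
    unfolding Z_def by (simp_all add: rls_M_eq)
  have "R * Z = 0\<^sub>m m N"
    unfolding Z_def using R_P by (simp add: rls_M_eq assoc_mult_mat_dim[symmetric])
  then have Z_range: "Z = B * (L * Z)"
    using constraint_space_in_range Z by simp
  have "transpose_mat B * transpose_mat R = transpose_mat (R * B)"
    by (simp add: transpose_mult_dim)
  then have B_R: "transpose_mat B * transpose_mat R = 0\<^sub>m p m"
    using R_B by simp
  have "transpose_mat B * (transpose_mat A * (A * (rls_M A R * R)))
      = transpose_mat B * transpose_mat R * (Hr * R)"
    unfolding rls_M_eq using gram_A_G[of "transpose_mat R * (Hr * R)"] by (simp add: mat_dim_simps)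
  then have "transpose_mat B * (transpose_mat A * (A * (rls_M A R * R))) = 0\<^sub>m p n"
    unfolding B_R by simp
  then have "transpose_mat B * transpose_mat A * A * P = transpose_mat B * transpose_mat A * A"
    by (simp add: rls_M_eq mat_dim_simps)
  then have "transpose_mat B * (transpose_mat A * (A * Z)) = transpose_mat B * (transpose_mat A * (A * (G * transpose_mat A)))"
    unfolding Z_def by (simp add: rls_M_eq assoc_mult_mat_dim[symmetric])
  then have "transpose_mat B * (transpose_mat A * (A * Z)) = transpose_mat X"
    using gram_A_G[of "transpose_mat A"] by (simp add: transpose_mult_dim)
  then have "L * Z = H * transpose_mat X"
    using Z_range H_gram_X[of "L * Z"] by (simp add: mat_dim_simps)
  then show ?thesis
    using Z_range unfolding Z_def by simp
qed

lemma rls_cov_reparametrised: "rls_cov A R Y = B * ehw_cov X Y * transpose_mat B"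
proof -
  have resid: "rls_resid A R Y = ols_resid X Y"
    unfolding rls_resid_def ols_resid_def rls_coef_reparametrised
    using ols_coef_carrier[OF X_carrier det_gram_X Y_carrier] by (simp add: mat_dim_simps)
  define E where "E = mat_diag N (\<lambda>i. (ols_resid X Y $ i)^2)"
  have E: "E \<in> carrier_mat N N"
    unfolding E_def by simp
  have P: "P \<in> carrier_mat n n"
    by (simp add: minus_carrier_mat rls_M_eq)
  have "rls_cov A R Y = P * (G * transpose_mat A * E * A * G) * transpose_mat P"
    unfolding rls_cov_def Let_def sandwich_def resid E_def G_def[symmetric] by simp
  also have "\<dots> = (P * G * transpose_mat A) * E * transpose_mat (P * G * transpose_mat A)"
    using P E G_symmetric by (intro sandwich_as_congruence) auto
  also have "P * G * transpose_mat A = B * H * transpose_mat X"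
    using P_G_At by (simp add: rls_M_eq assoc_mult_mat_dim)
  also have "(B * H * transpose_mat X) * E * transpose_mat (B * H * transpose_mat X)
      = B * (H * transpose_mat X * E * X * H) * transpose_mat B"
    using E H_symmetric by (intro sandwich_as_congruence[symmetric]) auto
  finally show ?thesis
    unfolding ehw_cov_def sandwich_def E_def H_def[symmetric] by simp
qed

end

section \<open>Kronecker products\<close>

lemma sum_lessThan_mult_div_mod:
  "(\<Sum>k < a * b. f (k div b) (k mod b)) = (\<Sum>i < a. \<Sum>j < (b :: nat). f i j :: 'a :: comm_monoid_add)"
proof -
  have "(\<Sum>k < a * b. f (k div b) (k mod b)) = (\<Sum>i < a. \<Sum>k \<in> {i * b..<i * b + b}. f (k div b) (k mod b))"
    by (simp add: sum.nat_group)
  also have "\<dots> = (\<Sum>i < a. \<Sum>j < b. f i j)"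
  proof (rule sum.cong[OF refl])
    fix i
    have "(\<Sum>k \<in> {i * b..<i * b + b}. f (k div b) (k mod b))
        = (\<Sum>j < b. f ((j + i * b) div b) ((j + i * b) mod b))"
      using sum.shift_bounds_nat_ivl[of "\<lambda>k. f (k div b) (k mod b)" 0 "i * b" b]
      by (simp add: lessThan_atLeast0 add.commute)
    also have "\<dots> = (\<Sum>j < b. f i j)"
      by (rule sum.cong) auto
    finally show "(\<Sum>k \<in> {i * b..<i * b + b}. f (k div b) (k mod b)) = (\<Sum>j < b. f i j)" .
  qed
  finally show ?thesis .
qed

lemma div_mod_less_mult:
  "i < a * b \<Longrightarrow> i div b < a" "i < a * b \<Longrightarrow> i mod b < (b :: nat)"
  by (simp add: less_mult_imp_div_less) (cases "b = 0", auto)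

lemma mkron_carrier [simp]:
  "mkron A B \<in> carrier_mat (dim_row A * dim_row B) (dim_col A * dim_col B)"
  "dim_row (mkron A B) = dim_row A * dim_row B" "dim_col (mkron A B) = dim_col A * dim_col B"
  unfolding mkron_def by auto

lemma mkron_index [simp]:
  "i < dim_row A * dim_row B \<Longrightarrow> j < dim_col A * dim_col B \<Longrightarrow>
   mkron A B $$ (i, j) = A $$ (i div dim_row B, j div dim_col B) * B $$ (i mod dim_row B, j mod dim_col B)"
  unfolding mkron_def by simp

lemma vkron_dim [simp]: "dim_vec (vkron a b) = dim_vec a * dim_vec b"
  unfolding vkron_def by simp

lemma vkron_index [simp]: "k < dim_vec a * dim_vec b \<Longrightarrow> vkron a b $ k = a $ (k div dim_vec b) * b $ (k mod dim_vec b)"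
  unfolding vkron_def by simp

lemma vkron_scalar_prod:
  assumes "dim_vec c = dim_vec a" and "dim_vec d = dim_vec b"
  shows "vkron a b \<bullet> vkron c d = (a \<bullet> c) * (b \<bullet> d)"
proof -
  have "vkron a b \<bullet> vkron c d
      = (\<Sum>k < dim_vec a * dim_vec b. (a $ (k div dim_vec b) * c $ (k div dim_vec b))
          * (b $ (k mod dim_vec b) * d $ (k mod dim_vec b)))"
    using assms div_mod_less_mult
    by (auto simp: scalar_prod_def lessThan_atLeast0 mult_ac intro!: sum.cong)
  also have "\<dots> = (\<Sum>i < dim_vec a. \<Sum>j < dim_vec b. (a $ i * c $ i) * (b $ j * d $ j))"
    by (rule sum_lessThan_mult_div_mod)
  also have "\<dots> = (a \<bullet> c) * (b \<bullet> d)"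
    using assms by (simp add: scalar_prod_def lessThan_atLeast0 sum_product)
  finally show ?thesis .
qed

lemma row_mkron:
  "i < dim_row A * dim_row B \<Longrightarrow> row (mkron A B) i = vkron (row A (i div dim_row B)) (row B (i mod dim_row B))"
  using div_mod_less_mult by (intro eq_vecI) auto

lemma col_mkron:
  "j < dim_col A * dim_col B \<Longrightarrow> col (mkron A B) j = vkron (col A (j div dim_col B)) (col B (j mod dim_col B))"
  using div_mod_less_mult by (intro eq_vecI) auto

lemma mkron_mult:
  assumes "dim_col A = dim_row C" and "dim_col B = dim_row D"
  shows "mkron A B * mkron C D = mkron (A * C) (B * D)"
proof (rule eq_matI)
  fix i j assume "i < dim_row (mkron (A * C) (B * D))" and "j < dim_col (mkron (A * C) (B * D))"
  then show "(mkron A B * mkron C D) $$ (i, j) = mkron (A * C) (B * D) $$ (i, j)"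
    using assms div_mod_less_mult[of i "dim_row A" "dim_row B"] div_mod_less_mult[of j "dim_col C" "dim_col D"]
    by (simp add: row_mkron col_mkron vkron_scalar_prod)
qed auto

lemma mkron_transpose: "transpose_mat (mkron A B) = mkron (transpose_mat A) (transpose_mat B)"
  using div_mod_less_mult by (intro eq_matI) auto

lemma mkron_one: "mkron (1\<^sub>m a) (1\<^sub>m b) = 1\<^sub>m (a * b)"
proof (rule eq_matI)
  fix i j assume "i < dim_row (1\<^sub>m (a * b))" "j < dim_col (1\<^sub>m (a * b))"
  moreover have "(i div b = j div b \<and> i mod b = j mod b) \<longleftrightarrow> i = j"
    by (metis div_mult_mod_eq)
  ultimately show "mkron (1\<^sub>m a) (1\<^sub>m b) $$ (i, j) = 1\<^sub>m (a * b) $$ (i, j)"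
    using div_mod_less_mult[of i a b] div_mod_less_mult[of j a b] by auto
qed auto

lemma mkron_add:
  "dim_row A = dim_row A' \<Longrightarrow> dim_col A = dim_col A' \<Longrightarrow> mkron (A + A') B = mkron A B + mkron A' B"
  using div_mod_less_mult by (intro eq_matI) (auto simp: distrib_right)

lemma mkron_smult: "mkron (c \<cdot>\<^sub>m A) B = c \<cdot>\<^sub>m mkron A B"
  using div_mod_less_mult by (intro eq_matI) auto

lemma mkron_zero: "mkron (0\<^sub>m a b) B = 0\<^sub>m (a * dim_row B) (b * dim_col B)"
  using div_mod_less_mult by (intro eq_matI) auto

section \<open>Block diagonal matrices\<close>

definition bdiag :: "'a :: zero mat \<Rightarrow> 'a mat \<Rightarrow> 'a mat" where
  "bdiag A D = four_block_mat A (0\<^sub>m (dim_row A) (dim_col D)) (0\<^sub>m (dim_row D) (dim_col A)) D"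

lemma bdiag_carrier [simp]:
  "bdiag A D \<in> carrier_mat (dim_row A + dim_row D) (dim_col A + dim_col D)"
  "dim_row (bdiag A D) = dim_row A + dim_row D" "dim_col (bdiag A D) = dim_col A + dim_col D"
  unfolding bdiag_def by auto

lemma bdiag_mult:
  "dim_col (A1 :: 'a :: semiring_0 mat) = dim_row A2 \<Longrightarrow> dim_col D1 = dim_row D2
   \<Longrightarrow> bdiag A1 D1 * bdiag A2 D2 = bdiag (A1 * A2) (D1 * D2)"
  unfolding bdiag_def
  by (subst mult_four_block_mat[of A1 "dim_row A1" "dim_col A1" _ "dim_col D1" _ "dim_row D1" D1
        A2 "dim_col A2" _ "dim_col D2" _ D2])
    (auto simp: mult_carrier_mat_iff)

lemma bdiag_transpose: "transpose_mat (bdiag A D) = bdiag (transpose_mat A) (transpose_mat D)"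
  by (intro eq_matI) (auto simp: bdiag_def)

lemma bdiag_add:
  "dim_row A1 = dim_row A2 \<Longrightarrow> dim_col A1 = dim_col A2
   \<Longrightarrow> dim_row D1 = dim_row D2 \<Longrightarrow> dim_col D1 = dim_col D2
   \<Longrightarrow> bdiag (A1 :: 'a :: monoid_add mat) D1 + bdiag A2 D2 = bdiag (A1 + A2) (D1 + D2)"
  by (intro eq_matI) (auto simp: bdiag_def)

lemma bdiag_smult: "k \<cdot>\<^sub>m bdiag A D = bdiag (k \<cdot>\<^sub>m A) (k \<cdot>\<^sub>m (D :: 'a :: semiring_0 mat))"
  by (intro eq_matI) (auto simp: bdiag_def)

lemma bdiag_one: "bdiag (1\<^sub>m a) (1\<^sub>m b) = (1\<^sub>m (a + b) :: 'a :: semiring_1 mat)"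
  unfolding bdiag_def by simp

lemma bdiag_zero: "bdiag (0\<^sub>m a b) (0\<^sub>m c d) = (0\<^sub>m (a + c) (b + d) :: 'a :: zero mat)"
  unfolding bdiag_def by simp

lemma col_bdiag:
  "j < dim_col A \<Longrightarrow> col (bdiag A D) j = col A j @\<^sub>v 0\<^sub>v (dim_row D)"
  "dim_col A \<le> j \<Longrightarrow> j < dim_col A + dim_col D
   \<Longrightarrow> col (bdiag A D) j = 0\<^sub>v (dim_row A) @\<^sub>v col D (j - dim_col A)"
  by (auto intro!: eq_vecI simp: bdiag_def)

section \<open>Factorial contrasts\<close>

unbundle bit_operations_syntax

lemma inj_on_reverse_index: "inj_on (\<lambda>k. K - 1 - k) {..<K :: nat}"
proof (rule inj_onI)
  fix x y assume "x \<in> {..<K}" "y \<in> {..<K}" "K - 1 - x = K - 1 - y"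
  then show "x = y" by auto
qed

lemma not_bit_if_less_pow2:
  assumes "(q :: nat) < 2 ^ K" and "K \<le> m"
  shows "\<not> bit q m"
proof -
  have "q < 2 ^ m"
    using assms by (meson order_less_le_trans one_le_numeral power_increasing)
  then show ?thesis
    by (simp add: bit_nat_def)
qed

lemma bit_add_pow2:
  assumes "(q :: nat) < 2 ^ K"
  shows "bit (q + 2 ^ K) m \<longleftrightarrow> m = K \<or> bit q m"
proof -
  have "q + 2 ^ K = q OR 2 ^ K"
    by (rule disjunctive_add_eq_or)
      (use assms not_bit_if_less_pow2 in \<open>simp add: and_exp_eq_0_iff_not_bit\<close>)
  then show ?thesis
    by (auto simp: bit_or_iff bit_exp_iff)
qed

lemma exists_bit_differs:
  assumes "(q :: nat) < 2 ^ K" "q' < 2 ^ K" "q \<noteq> q'"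
  shows "\<exists>m < K. bit q m \<noteq> bit q' m"
  using assms not_bit_if_less_pow2 by (metis bit_eq_iff not_le)

lemma sum_lessThan_pow2_Suc:
  fixes f :: "nat \<Rightarrow> 'a :: comm_monoid_add"
  shows "(\<Sum>q < 2 ^ Suc K. f q) = (\<Sum>q < 2 ^ K. f q) + (\<Sum>q < 2 ^ K. f (q + 2 ^ K))"
proof -
  have "{..<2 ^ Suc K} = {0..<2 ^ K} \<union> {2 ^ K..<2 ^ K + (2 :: nat) ^ K}"
    by auto
  then have "(\<Sum>q < 2 ^ Suc K. f q) = (\<Sum>q \<in> {0..<2 ^ K}. f q) + (\<Sum>q \<in> {0 + 2 ^ K..<2 ^ K + 2 ^ K}. f q)"
    by (simp add: sum.union_disjoint)
  also have "(\<Sum>q \<in> {0 + 2 ^ K..<2 ^ K + 2 ^ K}. f q) = (\<Sum>q \<in> {0..<2 ^ K}. f (q + 2 ^ K))"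
    by (rule sum.shift_bounds_nat_ivl)
  finally show ?thesis
    by (simp add: lessThan_atLeast0)
qed

definition bit_sign :: "nat \<Rightarrow> nat \<Rightarrow> real" where
  "bit_sign q m = (if bit q m then 1 else -1)"

text \<open>Induction on the number of bits: the top bit splits the levels into two halves on which the
  factor for \<open>K\<close> has opposite signs, so the halves cancel unless \<open>K\<close> lies in both or in neither
  of \<open>V\<close> and \<open>V'\<close>.\<close>
lemma bit_sign_prod_orthogonal:
  "V \<subseteq> {..<K} \<Longrightarrow> V' \<subseteq> {..<K} \<Longrightarrow>
   (\<Sum>q < 2 ^ K. (\<Prod>m \<in> V. bit_sign q m) * (\<Prod>m \<in> V'. bit_sign q m)) = (if V = V' then 2 ^ K else 0)"
proof (induction K arbitrary: V V')
  case 0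
  then show ?case by simp
next
  case (Suc K)
  define g where "g q = (\<Prod>m \<in> V - {K}. bit_sign q m) * (\<Prod>m \<in> V' - {K}. bit_sign q m)" for q
  define \<sigma> where "\<sigma> = (if K \<in> V then -1 else 1) * (if K \<in> V' then -1 else (1 :: real))"
  have IH: "(\<Sum>q < 2 ^ K. g q) = (if V - {K} = V' - {K} then 2 ^ K else 0)"
    unfolding g_def using Suc by (intro Suc.IH) auto
  have split_K: "(\<Prod>m \<in> W. bit_sign q m) = (if K \<in> W then bit_sign q K else 1) * (\<Prod>m \<in> W - {K}. bit_sign q m)"
    if "W \<subseteq> {..<Suc K}" for W q
    using that finite_subset[OF that] by (auto simp: prod.remove)
  have low: "(\<Prod>m \<in> V. bit_sign q m) * (\<Prod>m \<in> V'. bit_sign q m) = \<sigma> * g q" if "q < 2 ^ K" for q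
  proof -
    have "bit_sign q K = -1"
      using not_bit_if_less_pow2[OF that, of K] by (simp add: bit_sign_def)
    then show ?thesis
      unfolding split_K[OF Suc.prems(1)] split_K[OF Suc.prems(2)] g_def \<sigma>_def by simp
  qed
  have high: "(\<Prod>m \<in> V. bit_sign (q + 2 ^ K) m) * (\<Prod>m \<in> V'. bit_sign (q + 2 ^ K) m) = g q"
    if "q < 2 ^ K" for q
  proof -
    have "bit_sign (q + 2 ^ K) K = 1"
      using bit_add_pow2[OF that, of K] by (simp add: bit_sign_def)
    moreover have "(\<Prod>m \<in> W - {K}. bit_sign (q + 2 ^ K) m) = (\<Prod>m \<in> W - {K}. bit_sign q m)" for W
      using bit_add_pow2[OF that] by (intro prod.cong) (auto simp: bit_sign_def)
    ultimately show ?thesis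
      unfolding split_K[OF Suc.prems(1)] split_K[OF Suc.prems(2)] g_def by simp
  qed
  have "(\<Sum>q < 2 ^ Suc K. (\<Prod>m \<in> V. bit_sign q m) * (\<Prod>m \<in> V'. bit_sign q m))
      = (\<sigma> + 1) * (\<Sum>q < 2 ^ K. g q)"
    unfolding sum_lessThan_pow2_Suc using low high by (simp add: sum_distrib_left distrib_right sum.distrib)
  also have "\<dots> = (if V = V' then 2 ^ Suc K else 0)"
  proof (cases "K \<in> V \<longleftrightarrow> K \<in> V'")
    case True
    then have "V = V' \<longleftrightarrow> V - {K} = V' - {K}" and "\<sigma> = 1"
      unfolding \<sigma>_def by auto
    then show ?thesis
      unfolding IH by simp
  next
    case False
    then have "V \<noteq> V'" and "\<sigma> = -1"
      unfolding \<sigma>_def by auto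
    then show ?thesis
      by simp
  qed
  finally show ?case .
qed

lemma zprod_eq_bit_sign_prod:
  assumes "S \<subseteq> {..<K}"
  shows "zprod K S q = (\<Prod>m \<in> (\<lambda>k. K - 1 - k) ` S. bit_sign q m)"
proof -
  have "inj_on (\<lambda>k. K - 1 - k) S"
    using inj_on_reverse_index assms by (rule inj_on_subset)
  then have "(\<Prod>m \<in> (\<lambda>k. K - 1 - k) ` S. bit_sign q m) = (\<Prod>k \<in> S. bit_sign q (K - 1 - k))"
    by (simp add: prod.reindex)
  also have "\<dots> = zprod K S q"
    unfolding zprod_def zlev_def bit_sign_def using assms by (intro prod.cong) auto
  finally show ?thesis ..
qed

lemma zprod_empty [simp]: "zprod K {} q = 1"
  unfolding zprod_def by simp

lemma zprod_orthogonal: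
  assumes "S \<subseteq> {..<K}" and "T \<subseteq> {..<K}"
  shows "(\<Sum>q < 2 ^ K. zprod K S q * zprod K T q) = (if S = T then 2 ^ K else 0)"
proof -
  have "(\<lambda>k. K - 1 - k) ` S = (\<lambda>k. K - 1 - k) ` T \<longleftrightarrow> S = T"
    using inj_on_reverse_index assms by (rule inj_on_image_eq_iff)
  moreover have "(\<lambda>k. K - 1 - k) ` S \<subseteq> {..<K}" "(\<lambda>k. K - 1 - k) ` T \<subseteq> {..<K}"
    using assms by auto
  ultimately show ?thesis
    unfolding zprod_eq_bit_sign_prod[OF assms(1)] zprod_eq_bit_sign_prod[OF assms(2)]
    by (simp add: bit_sign_prod_orthogonal)
qed

text \<open>Expanding \<open>\<Prod>k<K. (1 + z\<^sub>k z'\<^sub>k)\<close> gives the sum over all subsets, and one factor vanishes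
  as soon as the two levels differ in one factor.\<close>
lemma zprod_complete:
  assumes "q < 2 ^ K" and "q' < 2 ^ K"
  shows "(\<Sum>S \<in> Pow {..<K}. zprod K S q * zprod K S q') = (if q = q' then 2 ^ K else 0)"
proof -
  have "(\<Sum>S \<in> Pow {..<K}. zprod K S q * zprod K S q')
      = (\<Sum>S \<in> Pow {..<K}. (\<Prod>k \<in> S. zlev K q k * zlev K q' k) * (\<Prod>k \<in> {..<K} - S. 1))"
    unfolding zprod_def by (simp add: prod.distrib)
  also have "\<dots> = (\<Prod>k < K. zlev K q k * zlev K q' k + 1)"
    by (rule prod_add[symmetric]) simp
  also have "\<dots> = (if q = q' then 2 ^ K else 0)"
  proof (cases "q = q'")
    case True
    have "(\<Prod>k < K. zlev K q k * zlev K q' k + 1) = (\<Prod>k < K. 2 :: real)"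
      by (rule prod.cong) (auto simp: True zlev_def)
    then show ?thesis
      using True by simp
  next
    case False
    then obtain m where m: "m < K" "bit q m \<noteq> bit q' m"
      using exists_bit_differs assms by blast
    then have "zlev K q (K - 1 - m) * zlev K q' (K - 1 - m) + 1 = 0" and "K - 1 - m < K"
      by (auto simp: zlev_def)
    then show ?thesis
      using False by (metis finite_lessThan lessThan_iff prod_zero_iff)
  qed
  finally show ?thesis .
qed

lemma set_distinct_subsets_list: "set (subsets_list K) = Pow {..<K}" "distinct (subsets_list K)"
proof -
  let ?f = "\<lambda>m :: nat. {k. k < K \<and> bit m k}"
  have inj: "inj_on ?f {0..<2 ^ K}"
  proof (rule inj_onI, rule ccontr)
    fix a b assume "a \<in> {0..<2 ^ K}" "b \<in> {0..<2 ^ K}" "?f a = ?f b" "a \<noteq> b"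
    then show False
      using exists_bit_differs[of a K b] by auto
  qed
  then have "card (?f ` {0..<2 ^ K}) = card (Pow {..<K})"
    by (simp add: card_image card_Pow)
  then have "?f ` {0..<2 ^ K} = Pow {..<K}"
    by (intro card_subset_eq) auto
  then show "set (subsets_list K) = Pow {..<K}"
    unfolding subsets_list_def by simp
  show "distinct (subsets_list K)"
    unfolding subsets_list_def using inj by (simp add: distinct_map)
qed

lemma set_distinct_Fminus: "set (Fminus K Fp) = {S \<in> Pow {..<K}. S \<noteq> {} \<and> S \<notin> set Fp}" "distinct (Fminus K Fp)"
  unfolding Fminus_def PK_def PK'_def using set_distinct_subsets_list by auto

lemma set_distinct_Fminus': "set (Fminus' K Fp') = {S \<in> Pow {..<K}. S \<notin> set Fp'}" "distinct (Fminus' K Fp')"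
  unfolding Fminus'_def PK'_def using set_distinct_subsets_list by auto

definition walsh_mat :: "nat \<Rightarrow> nat set list \<Rightarrow> real mat" where
  "walsh_mat K L = mat (2 ^ K) (length L) (\<lambda>(q, a). zprod K (L ! a) q)"

lemma walsh_mat_carrier [simp]:
  "walsh_mat K L \<in> carrier_mat (2 ^ K) (length L)"
  "dim_row (walsh_mat K L) = 2 ^ K" "dim_col (walsh_mat K L) = length L"
  unfolding walsh_mat_def by auto

lemma walsh_mat_index [simp]: "q < 2 ^ K \<Longrightarrow> a < length L \<Longrightarrow> walsh_mat K L $$ (q, a) = zprod K (L ! a) q"
  unfolding walsh_mat_def by simp

lemma Cmat_eq_walsh_mat: "Cmat K L = (1 / 2 ^ (K - 1)) \<cdot>\<^sub>m transpose_mat (walsh_mat K L)"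
  by (rule eq_matI) (auto simp: Cmat_def cvec_def mat_of_rows_index)

lemma walsh_mat_gram:
  assumes "set L \<subseteq> Pow {..<K}" and "set L' \<subseteq> Pow {..<K}"
  shows "transpose_mat (walsh_mat K L) * walsh_mat K L'
    = mat (length L) (length L') (\<lambda>(a, b). if L ! a = L' ! b then 2 ^ K else 0)"
proof (rule eq_matI)
  fix a b assume "a < dim_row (mat (length L) (length L') (\<lambda>(a, b). if L ! a = L' ! b then (2 :: real) ^ K else 0))"
    and "b < dim_col (mat (length L) (length L') (\<lambda>(a, b). if L ! a = L' ! b then (2 :: real) ^ K else 0))"
  then have ab: "a < length L" "b < length L'"
    by auto
  then have "L ! a \<subseteq> {..<K}" "L' ! b \<subseteq> {..<K}"
    using assms nth_mem by blast+
  then show "(transpose_mat (walsh_mat K L) * walsh_mat K L') $$ (a, b)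
      = mat (length L) (length L') (\<lambda>(a, b). if L ! a = L' ! b then 2 ^ K else 0) $$ (a, b)"
    using ab by (simp add: scalar_prod_def lessThan_atLeast0[symmetric] zprod_orthogonal)
qed auto

lemma walsh_mat_orthonormal:
  "set L \<subseteq> Pow {..<K} \<Longrightarrow> distinct L
   \<Longrightarrow> transpose_mat (walsh_mat K L) * walsh_mat K L = 2 ^ K \<cdot>\<^sub>m 1\<^sub>m (length L)"
  unfolding walsh_mat_gram[of L K L] by (rule eq_matI) (auto simp: nth_eq_iff_index_eq)

lemma walsh_mat_orthogonal:
  "set L \<subseteq> Pow {..<K} \<Longrightarrow> set L' \<subseteq> Pow {..<K} \<Longrightarrow> set L \<inter> set L' = {}
   \<Longrightarrow> transpose_mat (walsh_mat K L) * walsh_mat K L' = 0\<^sub>m (length L) (length L')"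
  unfolding walsh_mat_gram[of L K L'] by (rule eq_matI) (auto dest: nth_mem)

lemma walsh_mat_outer:
  assumes "distinct L"
  shows "walsh_mat K L * transpose_mat (walsh_mat K L)
    = mat (2 ^ K) (2 ^ K) (\<lambda>(q, q'). \<Sum>S \<in> set L. zprod K S q * zprod K S q')"
proof (rule eq_matI)
  fix q q' assume "q < dim_row (mat (2 ^ K) (2 ^ K) (\<lambda>(q, q'). \<Sum>S \<in> set L. zprod K S q * zprod K S q'))"
    and "q' < dim_col (mat (2 ^ K) (2 ^ K) (\<lambda>(q, q'). \<Sum>S \<in> set L. zprod K S q * zprod K S q'))"
  then have q: "q < 2 ^ K" "q' < 2 ^ K"
    by auto
  have "(walsh_mat K L * transpose_mat (walsh_mat K L)) $$ (q, q')
      = (\<Sum>a < length L. zprod K (L ! a) q * zprod K (L ! a) q')"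
    using q by (simp add: scalar_prod_def lessThan_atLeast0)
  also have "\<dots> = (\<Sum>S \<in> set L. zprod K S q * zprod K S q')"
    using sum.reindex_bij_betw[OF bij_betw_nth[OF assms, of "{..<length L}" "set L"]] by simp
  finally show "(walsh_mat K L * transpose_mat (walsh_mat K L)) $$ (q, q')
      = mat (2 ^ K) (2 ^ K) (\<lambda>(q, q'). \<Sum>S \<in> set L. zprod K S q * zprod K S q') $$ (q, q')"
    using q by simp
qed auto

lemma walsh_mat_complete:
  assumes "distinct (L1 @ L2)" and "set (L1 @ L2) = Pow {..<K}"
  shows "walsh_mat K L1 * transpose_mat (walsh_mat K L1) + walsh_mat K L2 * transpose_mat (walsh_mat K L2)
    = 2 ^ K \<cdot>\<^sub>m 1\<^sub>m (2 ^ K)"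
proof (rule eq_matI)
  fix q q' assume "q < dim_row ((2 :: real) ^ K \<cdot>\<^sub>m 1\<^sub>m (2 ^ K))" "q' < dim_col ((2 :: real) ^ K \<cdot>\<^sub>m 1\<^sub>m (2 ^ K))"
  then have q: "q < 2 ^ K" "q' < 2 ^ K"
    by auto
  have "(\<Sum>S \<in> set L1. zprod K S q * zprod K S q') + (\<Sum>S \<in> set L2. zprod K S q * zprod K S q')
      = (\<Sum>S \<in> Pow {..<K}. zprod K S q * zprod K S q')"
    using assms by (simp add: sum.union_disjoint[symmetric])
  then show "(walsh_mat K L1 * transpose_mat (walsh_mat K L1) + walsh_mat K L2 * transpose_mat (walsh_mat K L2)) $$ (q, q')
      = (2 ^ K \<cdot>\<^sub>m 1\<^sub>m (2 ^ K)) $$ (q, q')"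
    using assms q by (simp add: walsh_mat_outer zprod_complete)
qed auto

text \<open>The columns of \<open>effect_basis K J L L'\<close> span the parameters \<open>(\<theta>\<^sub>Y, \<theta>\<^sub>\<gamma>)\<close> whose intercept part
  carries only the factorial effects in \<open>L\<close> and whose slope part only those in \<open>L'\<close>.\<close>
definition effect_basis :: "nat \<Rightarrow> nat \<Rightarrow> nat set list \<Rightarrow> nat set list \<Rightarrow> real mat" where
  "effect_basis K J L L' = bdiag (walsh_mat K L) (mkron (walsh_mat K L') (1\<^sub>m J))"

lemma effect_basis_carrier [simp]:
  "effect_basis K J L L' \<in> carrier_mat (2 ^ K + 2 ^ K * J) (length L + length L' * J)"
  "dim_row (effect_basis K J L L') = 2 ^ K + 2 ^ K * J"
  "dim_col (effect_basis K J L L') = length L + length L' * J"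
  unfolding effect_basis_def by auto

lemma effect_basis_gram:
  "transpose_mat (effect_basis K J L1 L1') * effect_basis K J L2 L2'
   = bdiag (transpose_mat (walsh_mat K L1) * walsh_mat K L2)
       (mkron (transpose_mat (walsh_mat K L1') * walsh_mat K L2') (1\<^sub>m J))"
  unfolding effect_basis_def bdiag_transpose mkron_transpose by (simp add: bdiag_mult mkron_mult)

lemma effect_basis_outer:
  "effect_basis K J L L' * transpose_mat (effect_basis K J L L')
   = bdiag (walsh_mat K L * transpose_mat (walsh_mat K L))
       (mkron (walsh_mat K L' * transpose_mat (walsh_mat K L')) (1\<^sub>m J))"
  unfolding effect_basis_def bdiag_transpose mkron_transpose by (simp add: bdiag_mult mkron_mult)

lemma effect_basis_orthonormal:
  assumes "set L \<subseteq> Pow {..<K}" "distinct L" "set L' \<subseteq> Pow {..<K}" "distinct L'"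
  shows "transpose_mat (effect_basis K J L L') * effect_basis K J L L' = 2 ^ K \<cdot>\<^sub>m 1\<^sub>m (length L + length L' * J)"
  unfolding effect_basis_gram walsh_mat_orthonormal[OF assms(1,2)] walsh_mat_orthonormal[OF assms(3,4)]
  by (simp add: mkron_smult mkron_one bdiag_smult[symmetric] bdiag_one)

lemma effect_basis_orthogonal:
  assumes "set L1 \<subseteq> Pow {..<K}" "set L2 \<subseteq> Pow {..<K}" "set L1 \<inter> set L2 = {}"
    and "set L1' \<subseteq> Pow {..<K}" "set L2' \<subseteq> Pow {..<K}" "set L1' \<inter> set L2' = {}"
  shows "transpose_mat (effect_basis K J L1 L1') * effect_basis K J L2 L2'
    = 0\<^sub>m (length L1 + length L1' * J) (length L2 + length L2' * J)"
  unfolding effect_basis_gram walsh_mat_orthogonal[OF assms(1-3)] walsh_mat_orthogonal[OF assms(4-6)]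
  by (simp add: mkron_zero bdiag_zero)

lemma effect_basis_complete:
  assumes "distinct (L1 @ L2)" "set (L1 @ L2) = Pow {..<K}"
    and "distinct (L1' @ L2')" "set (L1' @ L2') = Pow {..<K}"
  shows "effect_basis K J L1 L1' * transpose_mat (effect_basis K J L1 L1')
      + effect_basis K J L2 L2' * transpose_mat (effect_basis K J L2 L2')
    = 2 ^ K \<cdot>\<^sub>m 1\<^sub>m (2 ^ K + 2 ^ K * J)"
  unfolding effect_basis_outer
  by (simp add: bdiag_add mkron_add[symmetric] walsh_mat_complete[OF assms(1,2)]
      walsh_mat_complete[OF assms(3,4)] mkron_smult mkron_one bdiag_smult[symmetric] bdiag_one)

lemma nth_concat_same_length:
  assumes "\<forall>y \<in> set ys. length (f y) = J" and "k < length ys * J"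
  shows "concat (map f ys) ! k = f (ys ! (k div J)) ! (k mod J)"
  using assms
proof (induction ys arbitrary: k)
  case Nil
  then show ?case by simp
next
  case (Cons y ys)
  show ?case
  proof (cases "k < J")
    case True
    then show ?thesis
      using Cons.prems by (simp add: nth_append)
  next
    case False
    then have "J > 0" "k - J < length ys * J"
      using Cons.prems by auto
    moreover have "k div J = Suc ((k - J) div J)" "k mod J = (k - J) mod J"
      using False \<open>J > 0\<close> by (simp_all add: le_div_geq le_mod_geq)
    ultimately show ?thesis
      using Cons False by (simp add: nth_append)
  qed
qed

section \<open>The factorial design\<close>

locale factorial_design =
  fixes K J N :: nat and lev :: "nat \<Rightarrow> nat" and x :: "nat \<Rightarrow> real vec" and Y :: "real vec"
    and Fp Fp' :: "nat set list"
  assumes lev: "\<forall>i<N. lev i < 2 ^ K"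
    and xdim: "\<forall>i<N. x i \<in> carrier_vec J"
    and Ydim: "Y \<in> carrier_vec N"
    and Fp_ne: "Fp \<noteq> []"
    and Fp_sub: "set Fp \<subseteq> PK K"
    and Fp_dist: "distinct Fp"
    and Fp'_sub: "set Fp' \<subseteq> PK' K"
    and Fp'_dist: "distinct Fp'"
    and nonsing: "invertible_mat (transpose_mat (chiL K J N lev x) * chiL K J N lev x)"
begin

abbreviation "Q \<equiv> (2 :: nat) ^ K"
abbreviation "n_keep \<equiv> Suc (length Fp) + length Fp' * J"
abbreviation "n_drop \<equiv> length (Fminus K Fp) + length (Fminus' K Fp') * J"

text \<open>\<open>E_keep\<close> parametrises the constraint space of the RLS problem; \<open>E_drop\<close> spans the
  constrained directions, \<open>Rmat\<close> being a multiple of its transpose.\<close>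
abbreviation "E_keep \<equiv> effect_basis K J ({} # Fp) Fp'"
abbreviation "E_drop \<equiv> effect_basis K J (Fminus K Fp) (Fminus' K Fp')"

lemma K_pos: "K > 0"
proof -
  obtain S where "S \<in> set Fp"
    using Fp_ne by (cases Fp) auto
  then have "S \<subseteq> {..<K}" "S \<noteq> {}"
    using Fp_sub unfolding PK_def PK'_def by auto
  then show ?thesis
    by (cases K) auto
qed

lemma effect_lists:
  "set ({} # Fp) \<subseteq> Pow {..<K}" "distinct ({} # Fp)"
  "set (Fminus K Fp) \<subseteq> Pow {..<K}" "distinct (Fminus K Fp)"
  "distinct (({} # Fp) @ Fminus K Fp)" "set (({} # Fp) @ Fminus K Fp) = Pow {..<K}"
  "set Fp' \<subseteq> Pow {..<K}" "distinct Fp'"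
  "set (Fminus' K Fp') \<subseteq> Pow {..<K}" "distinct (Fminus' K Fp')"
  "distinct (Fp' @ Fminus' K Fp')" "set (Fp' @ Fminus' K Fp') = Pow {..<K}"
  "set (Fminus K Fp) \<inter> set ({} # Fp) = {}" "set (Fminus' K Fp') \<inter> set Fp' = {}"
  using Fp_sub Fp_dist Fp'_sub Fp'_dist set_distinct_Fminus[of K Fp] set_distinct_Fminus'[of K Fp']
  unfolding PK_def PK'_def by auto

lemma Rmat_eq: "Rmat K J Fp Fp' = (1 / 2 ^ (K - 1)) \<cdot>\<^sub>m transpose_mat E_drop"
proof -
  have "Rmat K J Fp Fp' = bdiag (Cmat K (Fminus K Fp)) (mkron (Cmat K (Fminus' K Fp')) (1\<^sub>m J))"
    unfolding Rmat_def bdiag_def Let_def by (simp add: Cmat_def ac_simps)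
  also have "\<dots> = bdiag ((1 / 2 ^ (K - 1)) \<cdot>\<^sub>m transpose_mat (walsh_mat K (Fminus K Fp)))
      ((1 / 2 ^ (K - 1)) \<cdot>\<^sub>m transpose_mat (mkron (walsh_mat K (Fminus' K Fp')) (1\<^sub>m J)))"
    unfolding Cmat_eq_walsh_mat mkron_smult mkron_transpose by simp
  also have "\<dots> = (1 / 2 ^ (K - 1)) \<cdot>\<^sub>m transpose_mat E_drop"
    unfolding effect_basis_def bdiag_transpose bdiag_smult ..
  finally show ?thesis .
qed

lemma chiL_row:
  "i < N \<Longrightarrow> row (chiL K J N lev x) i = unit_vec Q (lev i) @\<^sub>v vkron (unit_vec Q (lev i)) (x i)"
  using xdim unfolding chiL_def by (intro eq_vecI) (auto simp: mat_of_rows_index mult.commute)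

lemma chiL_carrier: "chiL K J N lev x \<in> carrier_mat N (Q + Q * J)"
  unfolding chiL_def carrier_mat_def by (simp add: mult.commute)

lemma olsX_carrier: "olsX K J N lev x Fp Fp' \<in> carrier_mat N n_keep"
  unfolding olsX_def carrier_mat_def by simp

lemma olsX_index:
  assumes i: "i < N" and c: "c < n_keep"
  shows "olsX K J N lev x Fp Fp' $$ (i, c) = (if c < Suc (length Fp) then zprod K (({} # Fp) ! c) (lev i)
      else zprod K (Fp' ! ((c - Suc (length Fp)) div J)) (lev i) * x i $ ((c - Suc (length Fp)) mod J))"
proof -
  define slopes where "slopes S = map (\<lambda>j. zprod K S (lev i) * x i $ j) [0..<J]" for S
  have "olsX K J N lev x Fp Fp' $$ (i, c) = ([1] @ map (\<lambda>S. zprod K S (lev i)) Fp @ concat (map slopes Fp')) ! c"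
    unfolding olsX_def slopes_def using i c by (simp add: mat_of_rows_index vec_of_list_index del: vec_of_list_Cons)
  also have "\<dots> = (if c < Suc (length Fp) then zprod K (({} # Fp) ! c) (lev i)
      else slopes (Fp' ! ((c - Suc (length Fp)) div J)) ! ((c - Suc (length Fp)) mod J))"
    using c nth_concat_same_length[of Fp' slopes J "c - Suc (length Fp)"]
    by (cases c) (auto simp: nth_append slopes_def)
  also have "\<dots> = (if c < Suc (length Fp) then zprod K (({} # Fp) ! c) (lev i)
      else zprod K (Fp' ! ((c - Suc (length Fp)) div J)) (lev i) * x i $ ((c - Suc (length Fp)) mod J))"
    using c div_mod_less_mult(2)[of "c - Suc (length Fp)" "length Fp'" J] by (simp add: slopes_def)
  finally show ?thesis .
qed

lemma chiL_mult_effect_basis: "chiL K J N lev x * E_keep = olsX K J N lev x Fp Fp'"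
proof (rule eq_matI)
  fix i c assume "i < dim_row (olsX K J N lev x Fp Fp')" "c < dim_col (olsX K J N lev x Fp Fp')"
  then have i: "i < N" and c: "c < n_keep" and l: "lev i < Q"
    using olsX_carrier lev by auto
  have x: "dim_vec (x i) = J"
    using xdim i by auto
  have "(chiL K J N lev x * E_keep) $$ (i, c) = row (chiL K J N lev x) i \<bullet> col E_keep c"
    using i c chiL_carrier by simp
  also have "\<dots> = olsX K J N lev x Fp Fp' $$ (i, c)"
  proof (cases "c < Suc (length Fp)")
    case True
    then show ?thesis
      using i c l x unfolding effect_basis_def
      by (simp add: chiL_row col_bdiag olsX_index scalar_prod_append_dim unit_vec_scalar_prod_dim scalar_prod_zero_vec_dim)
  next
    case False
    define c' where "c' = c - Suc (length Fp)"
    have c': "c' < length Fp' * J"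
      using c False unfolding c'_def by simp
    then have "J > 0"
      by (cases J) auto
    have "c' div J < length Fp'" "c' mod J < J"
      using div_mod_less_mult[OF c'] by auto
    then show ?thesis
      using i c l x c' \<open>J > 0\<close> False unfolding effect_basis_def c'_def[symmetric]
      by (simp add: chiL_row col_bdiag olsX_index scalar_prod_append_dim unit_vec_scalar_prod_dim scalar_prod_zero_vec_dim col_mkron
          vkron_scalar_prod c'_def)
  qed
  finally show "(chiL K J N lev x * E_keep) $$ (i, c) = olsX K J N lev x Fp Fp' $$ (i, c)" .
qed (use olsX_carrier chiL_carrier in auto)

lemma contrast_scale: "(1 / 2 ^ (K - 1)) * real Q = 2"
  using K_pos by (cases K) auto

lemma reparametrisation:
  "rls_reparametrisation (chiL K J N lev x) (Rmat K J Fp Fp') E_keep ((1 / Q) \<cdot>\<^sub>m transpose_mat E_keep)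
     ((Q / 4) \<cdot>\<^sub>m 1\<^sub>m n_drop) ((1 / 2) \<cdot>\<^sub>m E_drop) Y N (Q + Q * J) n_drop n_keep"
proof
  note E_keep = effect_basis_orthonormal[OF effect_lists(1,2,7,8), of J]
  note E_drop = effect_basis_orthonormal[OF effect_lists(3,4,9,10), of J]
  note E_cross = effect_basis_orthogonal[OF effect_lists(3,1,13,9,7,14), of J]
  note E_complete = effect_basis_complete[OF effect_lists(5,6,11,12), of J]
  show "chiL K J N lev x \<in> carrier_mat N (Q + Q * J)"
    by (rule chiL_carrier)
  show "det (transpose_mat (chiL K J N lev x) * chiL K J N lev x) \<noteq> 0"
    using chiL_carrier nonsing by (intro det_ne_0_if_invertible_mat[of _ "Q + Q * J"]) auto
  show "((1 / Q) \<cdot>\<^sub>m transpose_mat E_keep) * E_keep = 1\<^sub>m n_keep"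
    using E_keep by (simp add: smult_mat_simps one_smult_mat)
  show "Rmat K J Fp Fp' * ((1 / 2) \<cdot>\<^sub>m E_drop) = 1\<^sub>m n_drop"
    using E_drop contrast_scale unfolding Rmat_eq by (simp add: smult_mat_simps one_smult_mat)
  show "Rmat K J Fp Fp' * E_keep = 0\<^sub>m n_drop n_keep"
    using E_cross unfolding Rmat_eq by (simp add: smult_mat_simps)
  show "E_keep * ((1 / Q) \<cdot>\<^sub>m transpose_mat E_keep)
      + transpose_mat (Rmat K J Fp Fp') * ((Q / 4) \<cdot>\<^sub>m 1\<^sub>m n_drop) * Rmat K J Fp Fp' = 1\<^sub>m (Q + Q * J)"
  proof -
    have "(1 / 2 ^ (K - 1)) * ((Q / 4) * (1 / 2 ^ (K - 1))) = 1 / real Q"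
      using contrast_scale by (auto simp: field_simps)
    then have "E_keep * ((1 / Q) \<cdot>\<^sub>m transpose_mat E_keep)
        + transpose_mat (Rmat K J Fp Fp') * ((Q / 4) \<cdot>\<^sub>m 1\<^sub>m n_drop) * Rmat K J Fp Fp'
      = (1 / Q) \<cdot>\<^sub>m (E_keep * transpose_mat E_keep + E_drop * transpose_mat E_drop)"
      unfolding Rmat_eq by (simp add: smult_mat_simps smult_add_mat_dim)
    then show ?thesis
      using E_complete by (simp add: smult_mat_simps one_smult_mat)
  qed
qed (use Ydim Rmat_eq in auto)

text \<open>OLS coefficient \<open>0\<close> belongs to the intercept, so \<open>tau_tilde\<close> and \<open>Omega_tilde\<close> read off
  coefficients \<open>1, \<dots>, length Fp\<close>, doubled.\<close>
abbreviation "selector \<equiv> mat (length Fp) n_keep (\<lambda>(a, c). if c = a + 1 then 2 else (0 :: real))"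

lemma Cmat_mult_take_rows: "Cmat K Fp * take_rows_mat Q E_keep = selector"
proof (rule eq_matI)
  fix a c assume "a < dim_row selector" and "c < dim_col selector"
  then have a: "a < length Fp" and c: "c < n_keep"
    by auto
  have "(Cmat K Fp * take_rows_mat Q E_keep) $$ (a, c)
      = (1 / 2 ^ (K - 1)) * (row (transpose_mat (walsh_mat K Fp)) a \<bullet> col (take_rows_mat Q E_keep) c)"
    using a c unfolding Cmat_eq_walsh_mat by (simp add: smult_mult_mat_dim)
  also have "\<dots> = (if c = a + 1 then 2 else 0)"
  proof (cases "c < Suc (length Fp)")
    case True
    then have "col (take_rows_mat Q E_keep) c = col (walsh_mat K ({} # Fp)) c"
      by (intro eq_vecI) (auto simp: take_rows_mat_def effect_basis_def bdiag_def)
    then have "row (transpose_mat (walsh_mat K Fp)) a \<bullet> col (take_rows_mat Q E_keep) c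
        = (transpose_mat (walsh_mat K Fp) * walsh_mat K ({} # Fp)) $$ (a, c)"
      using a True by (subst index_mult_mat(1)) auto
    also have "\<dots> = (if c = a + 1 then real Q else 0)"
    proof -
      have "Fp ! a \<noteq> {}"
        using nth_mem[OF a] Fp_sub unfolding PK_def by auto
      then have "Fp ! a = ({} # Fp) ! c \<longleftrightarrow> c = a + 1"
        using a True Fp_dist by (cases c) (auto simp: nth_eq_iff_index_eq)
      moreover have "set Fp \<subseteq> Pow {..<K}"
        using Fp_sub unfolding PK_def PK'_def by auto
      ultimately show ?thesis
        using a True walsh_mat_gram[OF _ effect_lists(1), of Fp] by simp
    qed
    finally show ?thesis
      using contrast_scale by simp
  next
    case False
    then have "col (take_rows_mat Q E_keep) c = 0\<^sub>v Q"
      using c by (intro eq_vecI) (auto simp: take_rows_mat_def effect_basis_def bdiag_def)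
    then show ?thesis
      using False a by (simp add: scalar_prod_zero_vec_dim)
  qed
  finally show "(Cmat K Fp * take_rows_mat Q E_keep) $$ (a, c) = selector $$ (a, c)"
    using a c by simp
qed (auto simp: Cmat_def)

interpretation reparam: rls_reparametrisation "chiL K J N lev x" "Rmat K J Fp Fp'" E_keep
  "(1 / Q) \<cdot>\<^sub>m transpose_mat E_keep" "(Q / 4) \<cdot>\<^sub>m 1\<^sub>m n_drop" "(1 / 2) \<cdot>\<^sub>m E_drop" Y N "Q + Q * J" n_drop n_keep
  by (rule reparametrisation)

abbreviation "design \<equiv> olsX K J N lev x Fp Fp'"

lemma Yhat_rS_eq: "Yhat_rS K J N lev x Y Fp Fp' = take_rows_mat Q E_keep *\<^sub>v ols_coef design Y"
  unfolding Yhat_rS_def reparam.rls_coef_reparametrised chiL_mult_effect_basis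
  by (intro eq_vecI) (simp_all add: row_take_rows_mat)

lemma Psi_rS_eq:
  "Psi_rS K J N lev x Y Fp Fp' = take_rows_mat Q E_keep * ehw_cov design Y * transpose_mat (take_rows_mat Q E_keep)"
  unfolding Psi_rS_def reparam.rls_cov_reparametrised chiL_mult_effect_basis
proof (rule eq_matI)
  fix i j assume "i < dim_row (take_rows_mat Q E_keep * ehw_cov design Y * transpose_mat (take_rows_mat Q E_keep))"
    and "j < dim_col (take_rows_mat Q E_keep * ehw_cov design Y * transpose_mat (take_rows_mat Q E_keep))"
  then show "mat Q Q (\<lambda>(a, b). (E_keep * ehw_cov design Y * transpose_mat E_keep) $$ (a, b)) $$ (i, j)
      = (take_rows_mat Q E_keep * ehw_cov design Y * transpose_mat (take_rows_mat Q E_keep)) $$ (i, j)"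
    using take_rows_mat_sandwich[of i Q j E_keep "ehw_cov design Y"] by simp
qed auto

lemma det_gram_olsX: "det (transpose_mat design * design) \<noteq> 0"
  using reparam.det_gram_X unfolding chiL_mult_effect_basis .

lemma ols_coef_olsX_carrier: "ols_coef design Y \<in> carrier_vec n_keep"
  by (rule ols_coef_carrier[OF olsX_carrier det_gram_olsX Ydim])

lemma ehw_cov_carrier: "ehw_cov design Y \<in> carrier_mat n_keep n_keep"
  using olsX_carrier minv_carrier[OF _ det_gram_olsX, of n_keep] unfolding ehw_cov_def sandwich_def
  by (simp add: mult_carrier_mat_iff)

lemma tau_tilde_eq: "tau_tilde K J N lev x Y Fp Fp' = selector *\<^sub>v ols_coef design Y"
proof (rule eq_vecI)
  fix a assume a: "a < dim_vec (selector *\<^sub>v ols_coef design Y)"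
  then have "(selector *\<^sub>v ols_coef design Y) $ a = 2 * ols_coef design Y $ (a + 1)"
    using ols_coef_olsX_carrier by (intro shifted_selector_mult_vec) auto
  then show "tau_tilde K J N lev x Y Fp Fp' $ a = (selector *\<^sub>v ols_coef design Y) $ a"
    using a by (simp add: tau_tilde_def)
qed (simp add: tau_tilde_def)

lemma Omega_tilde_eq: "Omega_tilde K J N lev x Y Fp Fp' = selector * ehw_cov design Y * transpose_mat selector"
proof (rule eq_matI)
  fix a b assume ab: "a < dim_row (selector * ehw_cov design Y * transpose_mat selector)"
    "b < dim_col (selector * ehw_cov design Y * transpose_mat selector)"
  then have "(selector * ehw_cov design Y * transpose_mat selector) $$ (a, b) = 2 * 2 * ehw_cov design Y $$ (a + 1, b + 1)"
    using ehw_cov_carrier by (intro shifted_selector_sandwich) auto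
  then show "Omega_tilde K J N lev x Y Fp Fp' $$ (a, b) = (selector * ehw_cov design Y * transpose_mat selector) $$ (a, b)"
    using ab by (simp add: Omega_tilde_def)
qed (simp_all add: Omega_tilde_def)

end

theorem propositionS5:
  fixes K J N :: nat
    and lev :: "nat \<Rightarrow> nat"            \<comment> \<open>treatment level of unit i (0-based)\<close>
    and x :: "nat \<Rightarrow> real vec"         \<comment> \<open>covariates x_i \<in> R^J\<close>
    and Y :: "real vec"                 \<comment> \<open>outcomes\<close>
    and Fp Fp' :: "nat set list"        \<comment> \<open>F_+ and F_+' (list order = row order)\<close>
  assumes lev: "\<forall>i<N. lev i < 2^K"
    and xdim: "\<forall>i<N. x i \<in> carrier_vec J"
    and xcent: "\<forall>j<J. (\<Sum>i<N. x i $ j) = 0"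
    and Ydim: "Y \<in> carrier_vec N"
    and Fp_ne: "Fp \<noteq> []"
    and Fp_sub: "set Fp \<subseteq> PK K"
    and Fp_dist: "distinct Fp"
    and Fp'_sub: "set Fp' \<subseteq> PK' K"
    and Fp'_dist: "distinct Fp'"
    and nonsing: "invertible_mat (transpose_mat (chiL K J N lev x) * chiL K J N lev x)"
  shows "tau_tilde K J N lev x Y Fp Fp' = Cmat K Fp *\<^sub>v Yhat_rS K J N lev x Y Fp Fp'
       \<and> Omega_tilde K J N lev x Y Fp Fp'
           = Cmat K Fp * Psi_rS K J N lev x Y Fp Fp' * transpose_mat (Cmat K Fp)"
proof -
  interpret factorial_design K J N lev x Y Fp Fp'
    using assms by unfold_locales auto
  have C: "Cmat K Fp \<in> carrier_mat (length Fp) Q"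
    unfolding Cmat_def using mat_of_rows_carrier(1)[of Q "map (cvec K) Fp"] by simp
  have T: "take_rows_mat Q E_keep \<in> carrier_mat Q n_keep"
    using take_rows_mat_carrier(1)[of Q E_keep] by simp
  show ?thesis
    unfolding tau_tilde_eq Omega_tilde_eq Yhat_rS_eq Psi_rS_eq Cmat_mult_take_rows[symmetric]
    using C T ehw_cov_carrier ols_coef_olsX_carrier by (simp add: mat_dim_simps)
qed

end
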